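(* Let $C$ be the ideal of the Kauffman monoid $\mathcal{K}_3$ generated by $c$. Then $\mathcal{K}_3\setminus C=\{1,h_1,h_2,h_1h_2,h_2h_1\}$. Moreover, the Rees quotient $\mathcal{K}_3/C$ is isomorphic to the 6-element Brandt monoid $B_2^1$ via $h_1\mapsto a$, $h_2\mapsto b$. The involution induced on $\mathcal{K}_3/C$ by the reflection swaps $ab$ and $ba$ and fixes all other elements; consequently $\{ab,ba,0\}$ is an involution subsemigroup isomorphic to the twisted semilattice $TSL$. Finally, each Zimin word is an involutory isoterm relative to $\mathcal{K}_3$ regarded as an involution semigroup under reflection.
   Context: $\mathcal{K}_3$ is the monoid presented by generators $c,h_1,h_2$ and relations $h_1h_2h_1=h_1$, $h_2h_1h_2=h_2$, and $h_i^2=ch_i=h_ic$ for $i=1,2$. The reflection ${}^*$ is the unique involutory anti-automorphism of $\mathcal{K}_3$ fixing $c,h_1,h_2$. The Brandt monoid $B_2^1$ is the monoid with zero $\{1,a,b,ab,ba,0\}$ defined by $a^2=b^2=0$, $aba=a$, $bab=b$. The twisted semilattice $TSL$ is the involution semigroup $\{e,f,0\}$ with $e^2=e$, $f^2=f$, all other products equal to $0$, and $e^\star=f$, $f^\star=e$, $0^\star=0$. Zimin words are defined by $Z_1=x_1$ and $Z_{n+1}=Z_nx_{n+1}Z_n$. A word $v$ is an involutory isoterm relative to an involution semigroup $\mathcal{S}$ if the only involutory word $v'$ (an element of the free semigroup on $X\cup\{x^\star\mid x\in X\}$, with $(x_1\cdots x_m)^\star=x_m^\star\cdots x_1^\star$)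 such that $\mathcal{S}$ satisfies $v\approx v'$ is $v'=v$. *)

theory Defs
  imports Main
begin

text \<open>Elements of K_3 are represented by words over the
generators (the free monoid), modulo the congruence kcong generated by the
defining relations.\<close>

datatype gen = Cg | H1 | H2

inductive krel :: "gen list \<Rightarrow> gen list \<Rightarrow> bool" where
  r1: "krel [H1, H2, H1] [H1]"
| r2: "krel [H2, H1, H2] [H2]"
| r3: "krel [H1, H1] [Cg, H1]"
| r4: "krel [Cg, H1] [H1, Cg]"
| r5: "krel [H2, H2] [Cg, H2]"
| r6: "krel [Cg, H2] [H2, Cg]"

inductive kcong :: "gen list \<Rightarrow> gen list \<Rightarrow> bool" where
  kc_rel: "krel u v \<Longrightarrow> kcong (p @ u @ q) (p @ v @ q)"
| kc_refl: "kcong u u"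
| kc_sym: "kcong u v \<Longrightarrow> kcong v u"
| kc_trans: "kcong u v \<Longrightarrow> kcong v w \<Longrightarrow> kcong u w"

definition inC :: "gen list \<Rightarrow> bool" where
  "inC w \<longleftrightarrow> (\<exists>p q. kcong w (p @ [Cg] @ q))"

definition rees :: "gen list \<Rightarrow> gen list \<Rightarrow> bool" where
  "rees u v \<longleftrightarrow> kcong u v \<or> (inC u \<and> inC v)"

text \<open>The reflection: the anti-automorphism fixing the generators, on words.\<close>
definition refl_word :: "gen list \<Rightarrow> gen list" where
  "refl_word w = rev w"

datatype B = B1 | Ba | Bb | Bab | Bba | B0

fun bmul :: "B \<Rightarrow> B \<Rightarrow> B" where
  "bmul B1 y = y"
| "bmul x B1 = x"
| "bmul B0 y = B0"
| "bmul x B0 = B0"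
| "bmul Ba Ba = B0"
| "bmul Ba Bb = Bab"
| "bmul Ba Bab = B0"
| "bmul Ba Bba = Ba"
| "bmul Bb Ba = Bba"
| "bmul Bb Bb = B0"
| "bmul Bb Bab = Bb"
| "bmul Bb Bba = B0"
| "bmul Bab Ba = Ba"
| "bmul Bab Bb = B0"
| "bmul Bab Bab = Bab"
| "bmul Bab Bba = B0"
| "bmul Bba Ba = B0"
| "bmul Bba Bb = Bb"
| "bmul Bba Bab = B0"
| "bmul Bba Bba = Bba"

fun gimg :: "gen \<Rightarrow> B" where
  "gimg Cg = B0"
| "gimg H1 = Ba"
| "gimg H2 = Bb"

definition kphi :: "gen list \<Rightarrow> B" where
  "kphi w = foldr (\<lambda>g acc. bmul (gimg g) acc) w B1"

fun binv :: "B \<Rightarrow> B" where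
  "binv Bab = Bba"
| "binv Bba = Bab"
| "binv x = x"

datatype T = Te | Tf | T0

fun tmul :: "T \<Rightarrow> T \<Rightarrow> T" where
  "tmul Te Te = Te"
| "tmul Tf Tf = Tf"
| "tmul x y = T0"

fun tstar :: "T \<Rightarrow> T" where
  "tstar Te = Tf"
| "tstar Tf = Te"
| "tstar T0 = T0"

text \<open>Letters of involutory words: a variable x_n or its star x_n^*.\<close>
datatype letter = V nat | S nat

fun lstar :: "letter \<Rightarrow> letter" where
  "lstar (V n) = S n"
| "lstar (S n) = V n"

fun leval :: "(nat \<Rightarrow> gen list) \<Rightarrow> letter \<Rightarrow> gen list" where
  "leval \<sigma> (V n) = \<sigma> n"
| "leval \<sigma> (S n) = refl_word (\<sigma> n)"

definition weval :: "(nat \<Rightarrow> gen list) \<Rightarrow> letter list \<Rightarrow> gen list" where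
  "weval \<sigma> w = concat (map (leval \<sigma>) w)"

definition K3_satisfies :: "letter list \<Rightarrow> letter list \<Rightarrow> bool" where
  "K3_satisfies v v' \<longleftrightarrow> (\<forall>\<sigma>. kcong (weval \<sigma> v) (weval \<sigma> v'))"

text \<open>Involutory words are elements of the free semigroup, i.e. nonempty lists.\<close>
definition K3_inv_isoterm :: "letter list \<Rightarrow> bool" where
  "K3_inv_isoterm v \<longleftrightarrow> (\<forall>v'. v' \<noteq> [] \<and> K3_satisfies v v' \<longrightarrow> v' = v)"

primrec zimin :: "nat \<Rightarrow> letter list" where
  "zimin 0 = []"
| "zimin (Suc n) = zimin n @ [V (Suc n)] @ zimin n"

end

theory Submission
  imports Defs
begin

(*
  The Rees quotient K_3/C is realised concretely by the map kphi from words over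
  c, h1, h2 to the Brandt monoid B_2^1 (h1 |-> a, h2 |-> b, c |-> 0).  The proof
  has three parts.

  (1) kphi is a monoid homomorphism that respects the defining relations of K_3,
      and a word lies in C exactly when kphi sends it to 0: every word is either
      in C or congruent to one of the five words 1, h1, h2, h1h2, h2h1, which
      kphi maps injectively onto the nonzero elements.  This gives both the
      description of K_3 \ C and the identification of the Rees congruence with
      the kernel of kphi.
  (2) Reversal of words respects the relations and is carried by kphi to the
      involution of B_2^1 swapping ab and ba; {ab, ba, 0} is then visibly TSL.
  (3) Since kphi is surjective and compatible with the involutions, every
      involutory identity of K_3 holds in (B_2^1, binv).  Zimin words are
      isoterms for B_2^1: writing Z_{n+1} = x_1 Y_1 x_1 Y_2 ... Y_m x_1 with the
      Y_i letters of a shifted Zimin word, suitable substitutions into B_2^1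
      force any word equal to Z_{n+1} to have the same shape, and deleting x_1
      reduces to the induction hypothesis.
*)

lemma bmul_assoc: "bmul (bmul x y) z = bmul x (bmul y z)"
  by (cases x; cases y; cases z) auto

lemma bmul_B1_right [simp]: "bmul x B1 = x"
  by (cases x) auto

lemma bmul_B0_left [simp]: "bmul B0 x = B0"
  by (cases x) auto

lemma bmul_B0_right [simp]: "bmul x B0 = B0"
  by (cases x) auto

lemma binv_bmul: "binv (bmul x y) = bmul (binv y) (binv x)"
  by (cases x; cases y) auto

lemma kcong_context: "kcong u v \<Longrightarrow> kcong (x @ u @ y) (x @ v @ y)"
proof (induction rule: kcong.induct)
  case (kc_rel u v p q)
  have "kcong ((x @ p) @ u @ (q @ y)) ((x @ p) @ v @ (q @ y))"
    by (rule kcong.kc_rel[OF kc_rel])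
  then show ?case by simp
qed (auto intro: kcong.intros)

lemma kcong_krel: "krel u v \<Longrightarrow> kcong u v"
  using kcong.kc_rel[of u v "[]" "[]"] by simp

lemma kphi_Nil [simp]: "kphi [] = B1"
  by (simp add: kphi_def)

lemma kphi_Cons [simp]: "kphi (g # w) = bmul (gimg g) (kphi w)"
  by (simp add: kphi_def)

lemma kphi_append: "kphi (u @ v) = bmul (kphi u) (kphi v)"
  by (induction u) (simp_all add: bmul_assoc)

text \<open>The defining relations hold in B_2^1, so kphi factors through K_3.\<close>
lemma kphi_kcong: "kcong u v \<Longrightarrow> kphi u = kphi v"
proof (induction rule: kcong.induct)
  case (kc_rel u v p q)
  then have "kphi u = kphi v" by (induction rule: krel.induct) simp_all
  then show ?case by (simp add: kphi_append)
qed simp_all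

lemma kphi_surj: "surj kphi"
proof -
  have "b \<in> range kphi" for b
  proof (cases b)
    case B1 then show ?thesis using kphi_Nil by (metis rangeI)
  next
    case Ba then show ?thesis using rangeI[of kphi "[H1]"] by simp
  next
    case Bb then show ?thesis using rangeI[of kphi "[H2]"] by simp
  next
    case Bab then show ?thesis using rangeI[of kphi "[H1, H2]"] by simp
  next
    case Bba then show ?thesis using rangeI[of kphi "[H2, H1]"] by simp
  next
    case B0 then show ?thesis using rangeI[of kphi "[Cg]"] by simp
  qed
  then show ?thesis by blast
qed

lemma inC_kcong: "kcong w w' \<Longrightarrow> inC w' \<Longrightarrow> inC w"
  unfolding inC_def by (meson kcong.kc_trans)

lemma inC_Cons:
  assumes "inC w"
  shows "inC (g # w)"
proof -
  obtain p q where "kcong w (p @ [Cg] @ q)" using assms unfolding inC_def by blast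
  then have "kcong (g # w) ((g # p) @ [Cg] @ q)" using kcong_context[of _ _ "[g]" "[]"] by simp
  then show ?thesis unfolding inC_def by blast
qed

lemma inC_Cg: "inC (Cg # w)"
proof -
  have "kcong (Cg # w) ([] @ [Cg] @ w)" by (simp add: kcong.kc_refl)
  then show ?thesis unfolding inC_def by blast
qed

text \<open>A word beginning with a square of a generator lies in C, as h_i^2 = c h_i.\<close>
lemma inC_square: "inC (g # g # w)"
proof (cases g)
  case H1
  have "kcong ([] @ [H1, H1] @ w) ([] @ [Cg, H1] @ w)" by (rule kcong.kc_rel[OF krel.r3])
  then show ?thesis using H1 inC_kcong inC_Cg by simp
next
  case H2
  have "kcong ([] @ [H2, H2] @ w) ([] @ [Cg, H2] @ w)" by (rule kcong.kc_rel[OF krel.r5])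
  then show ?thesis using H2 inC_kcong inC_Cg by simp
qed (simp add: inC_Cg)

lemma kphi_inC: "inC w \<Longrightarrow> kphi w = B0"
  unfolding inC_def by (auto dest: kphi_kcong simp: kphi_append)

definition normal_forms :: "gen list set" where
  "normal_forms = {[], [H1], [H2], [H1, H2], [H2, H1]}"

text \<open>Multiplying a normal form on the left by a generator either falls into C
  or yields (up to h_1h_2h_1 = h_1, h_2h_1h_2 = h_2) another normal form.\<close>
lemma normal_form_Cons:
  assumes "v \<in> normal_forms"
  shows "inC (g # v) \<or> (\<exists>v' \<in> normal_forms. kcong (g # v) v')"
  using assms kcong_krel[OF krel.r1] kcong_krel[OF krel.r2]
  by (cases g) (auto simp: normal_forms_def inC_Cg inC_square intro: kcong.kc_refl)

lemma normal_form_exists: "inC w \<or> (\<exists>v \<in> normal_forms. kcong w v)"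
proof (induction w)
  case Nil
  show ?case by (auto simp: normal_forms_def intro: kcong.kc_refl)
next
  case (Cons g w)
  then show ?case
  proof
    assume "inC w"
    then show ?thesis by (simp add: inC_Cons)
  next
    assume "\<exists>v \<in> normal_forms. kcong w v"
    then obtain v where v: "v \<in> normal_forms" "kcong w v" by blast
    then have "kcong (g # w) (g # v)" using kcong_context[of w v "[g]" "[]"] by simp
    then show ?thesis using normal_form_Cons[OF v(1), of g] inC_kcong kcong.kc_trans by blast
  qed
qed

lemma kphi_normal_form_nonzero: "v \<in> normal_forms \<Longrightarrow> kphi v \<noteq> B0"
  by (auto simp: normal_forms_def)

lemma kphi_inj_on_normal_forms: "inj_on kphi normal_forms"
  by (auto simp: normal_forms_def inj_on_def)

lemma kphi_eq_B0_iff: "kphi w = B0 \<longleftrightarrow> inC w"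
  using normal_form_exists[of w] kphi_inC kphi_kcong kphi_normal_form_nonzero by metis

lemma not_inC_iff: "\<not> inC w \<longleftrightarrow> (\<exists>v \<in> normal_forms. kcong w v)"
  using normal_form_exists[of w] kphi_eq_B0_iff kphi_kcong kphi_normal_form_nonzero by metis

text \<open>The Rees congruence of C is the kernel of kphi, so K_3/C is isomorphic to B_2^1.\<close>
lemma rees_iff_kphi_eq: "rees u v \<longleftrightarrow> kphi u = kphi v"
proof
  assume "rees u v"
  then show "kphi u = kphi v" unfolding rees_def using kphi_eq_B0_iff kphi_kcong by metis
next
  assume eq: "kphi u = kphi v"
  show "rees u v"
  proof (cases "inC u")
    case True
    then show ?thesis using eq kphi_eq_B0_iff unfolding rees_def by metis
  next
    case False
    then obtain u' v' where u': "u' \<in> normal_forms" "kcong u u'"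
      and v': "v' \<in> normal_forms" "kcong v v'"
      using eq kphi_eq_B0_iff not_inC_iff by metis
    then have "u' = v'"
      using eq kphi_kcong kphi_inj_on_normal_forms by (metis inj_onD)
    then show ?thesis
      using u' v' unfolding rees_def by (meson kcong.kc_sym kcong.kc_trans)
  qed
qed

lemma krel_rev: "krel u v \<Longrightarrow> kcong (rev u) (rev v)"
proof (induction rule: krel.induct)
  case r1
  show ?case using kcong_krel[OF krel.r1] by simp
next
  case r2
  show ?case using kcong_krel[OF krel.r2] by simp
next
  case r3
  show ?case
    using kcong_krel[OF krel.r3] kcong_krel[OF krel.r4] kcong.kc_trans by fastforce
next
  case r4
  show ?case using kcong_krel[OF krel.r4] kcong.kc_sym by fastforce
next
  case r5
  show ?case
    using kcong_krel[OF krel.r5] kcong_krel[OF krel.r6] kcong.kc_trans by fastforce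
next
  case r6
  show ?case using kcong_krel[OF krel.r6] kcong.kc_sym by fastforce
qed

lemma kcong_refl_word: "kcong u v \<Longrightarrow> kcong (refl_word u) (refl_word v)"
  unfolding refl_word_def
proof (induction rule: kcong.induct)
  case (kc_rel u v p q)
  then show ?case using kcong_context[OF krel_rev[OF kc_rel], of "rev q" "rev p"] by simp
qed (auto intro: kcong.intros)

lemma kphi_refl_word: "kphi (refl_word w) = binv (kphi w)"
proof (induction w)
  case (Cons g w)
  have "binv (gimg g) = gimg g" by (cases g) auto
  then show ?case using Cons by (simp add: refl_word_def kphi_append binv_bmul)
qed (simp add: refl_word_def)

text \<open>ab and ba are idempotents interchanged by binv with ab ba = ba ab = 0, so
  ab \<mapsto> e, ba \<mapsto> f, 0 \<mapsto> 0 identifies {ab, ba, 0} with TSL.\<close>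
fun tsl_of :: "B \<Rightarrow> T" where
  "tsl_of Bab = Te"
| "tsl_of Bba = Tf"
| "tsl_of _ = T0"

lemma tsl_of_bij: "bij_betw tsl_of {Bab, Bba, B0} (UNIV :: T set)"
proof -
  have "(UNIV :: T set) = {Te, Tf, T0}" using T.exhaust by blast
  then show ?thesis by (auto simp: bij_betw_def inj_on_def)
qed

lemma tsl_of_iso:
  assumes "x \<in> {Bab, Bba, B0}" "y \<in> {Bab, Bba, B0}"
  shows "tsl_of (bmul x y) = tmul (tsl_of x) (tsl_of y)" "tsl_of (binv x) = tstar (tsl_of x)"
  using assms by auto

primrec bval_letter :: "(nat \<Rightarrow> B) \<Rightarrow> letter \<Rightarrow> B" where
  "bval_letter \<sigma> (V n) = \<sigma> n"
| "bval_letter \<sigma> (S n) = binv (\<sigma> n)"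

primrec bval :: "(nat \<Rightarrow> B) \<Rightarrow> letter list \<Rightarrow> B" where
  "bval \<sigma> [] = B1"
| "bval \<sigma> (l # w) = bmul (bval_letter \<sigma> l) (bval \<sigma> w)"

abbreviation var :: "letter \<Rightarrow> nat" where
  "var l \<equiv> (case l of V n \<Rightarrow> n | S n \<Rightarrow> n)"

lemma kphi_weval: "kphi (weval \<tau> w) = bval (\<lambda>n. kphi (\<tau> n)) w"
proof (induction w)
  case (Cons l w)
  then show ?case by (cases l) (simp_all add: weval_def kphi_append kphi_refl_word)
qed (simp add: weval_def)

text \<open>Every identity of K_3 with reflection holds in B_2^1 with binv, since kphi is
  a surjective homomorphism of involution monoids.\<close>
lemma bval_eq_if_K3_satisfies:
  assumes "K3_satisfies v v'"
  shows "bval \<sigma> v = bval \<sigma> v'"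
proof -
  define \<tau> where "\<tau> n = inv kphi (\<sigma> n)" for n
  have "(\<lambda>n. kphi (\<tau> n)) = \<sigma>"
    using kphi_surj by (simp add: \<tau>_def surj_f_inv_f)
  moreover have "kphi (weval \<tau> v) = kphi (weval \<tau> v')"
    using assms kphi_kcong unfolding K3_satisfies_def by blast
  ultimately show ?thesis by (simp add: kphi_weval)
qed

definition brandt_isoterm :: "letter list \<Rightarrow> bool" where
  "brandt_isoterm v \<longleftrightarrow> (\<forall>v'. (\<forall>\<sigma>. bval \<sigma> v = bval \<sigma> v') \<longrightarrow> v' = v)"

lemma K3_inv_isoterm_if_brandt_isoterm: "brandt_isoterm v \<Longrightarrow> K3_inv_isoterm v"
  unfolding brandt_isoterm_def K3_inv_isoterm_def using bval_eq_if_K3_satisfies by blast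

section \<open>Zimin words are isoterms for B_2^1\<close>

fun interleave :: "letter \<Rightarrow> letter list \<Rightarrow> letter list" where
  "interleave x [] = [x]"
| "interleave x (y # ys) = x # y # interleave x ys"

lemma interleave_append: "interleave x (A @ y # B) = interleave x A @ y # interleave x B"
  by (induction A) auto

lemma set_interleave [simp]: "set (interleave x Y) = insert x (set Y)"
  by (induction Y) auto

lemma filter_interleave:
  "\<forall>l \<in> set Y. var l \<noteq> k \<Longrightarrow> filter (\<lambda>l. var l \<noteq> k) (interleave (V k) Y) = Y"
  by (induction Y) auto

text \<open>The Zimin word in the variables x_k, ..., x_{k+n-1}, built from its first variable.\<close>
primrec zimin_from :: "nat \<Rightarrow> nat \<Rightarrow> letter list" where
  "zimin_from k 0 = []"
| "zimin_from k (Suc n) = interleave (V k) (zimin_from (Suc k) n)"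

lemma zimin_from_Suc: "zimin_from k (Suc n) = zimin_from k n @ [V (k + n)] @ zimin_from k n"
proof (induction n arbitrary: k)
  case (Suc n)
  have "zimin_from k (Suc (Suc n)) = interleave (V k) (zimin_from (Suc k) (Suc n))"
    by (rule zimin_from.simps(2))
  also have "\<dots> = interleave (V k) (zimin_from (Suc k) n @ V (Suc k + n) # zimin_from (Suc k) n)"
    by (simp only: Suc append.simps)
  also have "\<dots> = zimin_from k (Suc n) @ [V (k + Suc n)] @ zimin_from k (Suc n)"
    by (simp add: interleave_append)
  finally show ?case .
qed simp

lemma zimin_eq_zimin_from: "zimin n = zimin_from 1 n"
  by (induction n) (simp_all add: zimin_from_Suc del: zimin_from.simps(2))

lemma var_zimin_from: "l \<in> set (zimin_from k n) \<Longrightarrow> \<exists>m \<ge> k. l = V m"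
  by (induction n arbitrary: k) fastforce+

lemma bval_delete: "bval \<sigma> (filter (\<lambda>l. var l \<noteq> k) w) = bval (\<sigma>(k := B1)) w"
proof (induction w)
  case (Cons l w) then show ?case by (cases l) auto
qed simp

text \<open>Substituting 0 everywhere shows that only the empty word equals 1.\<close>
lemma brandt_isoterm_Nil: "brandt_isoterm []"
  unfolding brandt_isoterm_def
proof (intro allI impI)
  fix v' :: "letter list"
  assume "\<forall>\<sigma>. bval \<sigma> [] = bval \<sigma> v'"
  then have "bval (\<lambda>_. B0) v' = B1" by simp
  moreover have "bval_letter (\<lambda>_. B0) l = B0" for l by (cases l) simp_all
  ultimately show "v' = []" by (cases v') simp_all
qed

text \<open>Under x_k \<mapsto> ab and all other variables \<mapsto> 1, a word evaluating to 1 or ab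
  cannot contain x_k^*, which evaluates to ba.\<close>
lemma no_star_if_idempotent:
  "bval (\<lambda>m. if m = k then Bab else B1) w \<in> {B1, Bab} \<Longrightarrow> S k \<notin> set w"
proof (induction w)
  case (Cons l w)
  then show ?case
    by (cases l; cases "bval (\<lambda>m. if m = k then Bab else B1) w") (auto split: if_splits)
qed simp

lemma alternating_if_bval_a:
  assumes "bval (\<lambda>m. if m = k then Ba else Bb) w = Ba" and "S k \<notin> set w"
  shows "w = interleave (V k) (filter (\<lambda>l. var l \<noteq> k) w)"
  using assms
proof (induction w rule: induct_list012)
  case (2 l)
  then show ?case by (cases l) (auto split: if_splits)
next
  case (3 l1 l2 w)
  let ?\<sigma> = "\<lambda>m. if m = k then Ba else Bb"
  have "bmul (bval_letter ?\<sigma> l1) (bmul (bval_letter ?\<sigma> l2) (bval ?\<sigma> w)) = Ba"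
    using "3.prems"(1) by simp
  then have "bval_letter ?\<sigma> l1 = Ba" "bval_letter ?\<sigma> l2 = Bb" "bval ?\<sigma> w = Ba"
    by (cases l1; cases l2; cases "bval ?\<sigma> w"; auto split: if_splits)+
  then have "l1 = V k" "var l2 \<noteq> k" "w = interleave (V k) (filter (\<lambda>l. var l \<noteq> k) w)"
    using "3.prems"(2) "3.IH"(1) by (cases l1; cases l2; auto split: if_splits)+
  then show ?case by simp
qed simp

lemma interleave_recognition:
  assumes eq: "\<forall>\<sigma>. bval \<sigma> (interleave (V k) Y) = bval \<sigma> v'"
    and Y: "\<forall>l \<in> set Y. var l \<noteq> k"
  shows "v' = interleave (V k) (filter (\<lambda>l. var l \<noteq> k) v')"
proof -
  have "bval (\<lambda>m. if m = k then Bab else B1) (interleave (V k) Y) = Bab"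
    using Y by (induction Y) (auto split: letter.splits)
  then have "S k \<notin> set v'" using eq no_star_if_idempotent by fastforce
  moreover have "bval (\<lambda>m. if m = k then Ba else Bb) (interleave (V k) Y) = Ba"
    using Y by (induction Y) (auto split: letter.splits)
  ultimately show ?thesis using eq alternating_if_bval_a by metis
qed

text \<open>Induction on n: deleting x_k from an equal word v' yields a word equal to the
  shifted Zimin word Y, hence equal to Y by induction, and interleave recognition
  then restores v'.\<close>
lemma zimin_from_brandt_isoterm: "brandt_isoterm (zimin_from k n)"
proof (induction n arbitrary: k)
  case 0
  show ?case by (simp add: brandt_isoterm_Nil)
next
  case (Suc n)
  let ?Y = "zimin_from (Suc k) n"
  have Y: "\<forall>l \<in> set ?Y. var l \<noteq> k" using var_zimin_from by fastforce
  show ?case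
    unfolding brandt_isoterm_def
  proof (intro allI impI)
    fix v'
    assume eq: "\<forall>\<sigma>. bval \<sigma> (zimin_from k (Suc n)) = bval \<sigma> v'"
    have "filter (\<lambda>l. var l \<noteq> k) (interleave (V k) ?Y) = ?Y"
      using Y by (rule filter_interleave)
    then have "bval \<sigma> ?Y = bval \<sigma> (filter (\<lambda>l. var l \<noteq> k) v')" for \<sigma>
      using eq by (metis bval_delete zimin_from.simps(2))
    then have "filter (\<lambda>l. var l \<noteq> k) v' = ?Y"
      using Suc.IH unfolding brandt_isoterm_def by blast
    then show "v' = zimin_from k (Suc n)"
      using interleave_recognition[OF _ Y] eq by (metis zimin_from.simps(2))
  qed
qed

lemma zimin_K3_inv_isoterm: "K3_inv_isoterm (zimin n)"
  by (simp add: zimin_eq_zimin_from zimin_from_brandt_isoterm K3_inv_isoterm_if_brandt_isoterm)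

theorem mainTheorem8:
  shows "(\<forall>w. \<not> inC w \<longleftrightarrow>
            (\<exists>v \<in> {[], [H1], [H2], [H1, H2], [H2, H1]}. kcong w v))
    \<and> (\<forall>u v. rees u v \<longleftrightarrow> kphi u = kphi v)
    \<and> surj kphi
    \<and> (\<forall>u v. kphi (u @ v) = bmul (kphi u) (kphi v))
    \<and> kphi [] = B1 \<and> kphi [H1] = Ba \<and> kphi [H2] = Bb
    \<and> (\<forall>u v. kcong u v \<longrightarrow> kcong (refl_word u) (refl_word v))
    \<and> (\<forall>w. kphi (refl_word w) = binv (kphi w))
    \<and> (\<forall>x \<in> {Bab, Bba, B0}. \<forall>y \<in> {Bab, Bba, B0}.
          bmul x y \<in> {Bab, Bba, B0} \<and> binv x \<in> {Bab, Bba, B0})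
    \<and> (\<exists>\<psi>. bij_betw \<psi> {Bab, Bba, B0} (UNIV :: T set)
          \<and> (\<forall>x \<in> {Bab, Bba, B0}. \<forall>y \<in> {Bab, Bba, B0}.
                \<psi> (bmul x y) = tmul (\<psi> x) (\<psi> y))
          \<and> (\<forall>x \<in> {Bab, Bba, B0}. \<psi> (binv x) = tstar (\<psi> x)))
    \<and> (\<forall>n \<ge> 1. K3_inv_isoterm (zimin n))"
proof -
  have tsl: "\<exists>\<psi>. bij_betw \<psi> {Bab, Bba, B0} (UNIV :: T set)
          \<and> (\<forall>x \<in> {Bab, Bba, B0}. \<forall>y \<in> {Bab, Bba, B0}.
                \<psi> (bmul x y) = tmul (\<psi> x) (\<psi> y))
          \<and> (\<forall>x \<in> {Bab, Bba, B0}. \<psi> (binv x) = tstar (\<psi> x))"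
    using tsl_of_bij tsl_of_iso by blast
  have closed: "\<forall>x \<in> {Bab, Bba, B0}. \<forall>y \<in> {Bab, Bba, B0}.
          bmul x y \<in> {Bab, Bba, B0} \<and> binv x \<in> {Bab, Bba, B0}"
    by auto
  show ?thesis
    using not_inC_iff[unfolded normal_forms_def] rees_iff_kphi_eq kphi_surj kphi_append
      kcong_refl_word kphi_refl_word closed tsl zimin_K3_inv_isoterm
    by simp
qed

end
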